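(* Let $n$ be a power of $2$ and consider the non-local hidden matching game on $n$. Its classical value $\omega_c$ (the maximum winning probability achievable by classical, i.e. local deterministic or shared-randomness, strategies) satisfies $$\omega_c \leq \frac{1}{2} + \frac{8\sqrt{n}\,\log n}{n-1}.$$
   Context: Let $n$ be a power of $2$, let $[n]$ be identified with $\{0,1\}^{\log n}$ (so that indices $i,j \in [n]$ are viewed as $\log n$-bit strings), and let $M_n$ be the set of all perfect matchings on $[n]$. In the non-local hidden matching game, Alice receives $x \in \{0,1\}^n$ and Bob receives $M \in M_n$, both uniformly distributed and independent. Alice outputs $a \in \{0,1\}^{\log n}$; Bob outputs an edge $(i,j) \in M$ and a string $b \in \{0,1\}^{\log n}$. They win iff $(a \oplus b)\cdot(i \oplus j) = x_i \oplus x_j$, where $\cdot$ is the inner product modulo $2$ and $\oplus$ is bitwise XOR. $\log$ denotes the base-$2$ logarithm. *)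

theory Defs
  imports Main "HOL-Library.FuncSet" Complex_Main
begin

text \<open>Indices in [n] (n = 2^k) are naturals below 2^k, viewed as k-bit strings
  via their binary expansion; bitwise XOR is the library operation xor on nat.\<close>

definition bits_ip :: "nat \<Rightarrow> nat \<Rightarrow> nat \<Rightarrow> bool" where
  "bits_ip k a c = odd (card {t. t < k \<and> bit a t \<and> bit c t})"

definition hm_inputs :: "nat \<Rightarrow> (nat \<Rightarrow> bool) set" where
  "hm_inputs n = {0..<n} \<rightarrow>\<^sub>E (UNIV :: bool set)"

definition perfect_matchings :: "nat \<Rightarrow> nat set set set" where
  "perfect_matchings n = {M. (\<forall>e\<in>M. \<exists>i j. i \<noteq> j \<and> e = {i, j})
       \<and> (\<forall>e\<in>M. \<forall>e'\<in>M. e \<noteq> e' \<longrightarrow> e \<inter> e' = {})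
       \<and> \<Union>M = {0..<n}}"

definition hm_wins :: "nat \<Rightarrow> (nat \<Rightarrow> bool) \<Rightarrow> nat \<Rightarrow> (nat \<times> nat) \<times> nat \<Rightarrow> bool" where
  "hm_wins k x a out = (case out of ((i, j), b) \<Rightarrow>
      (bits_ip k (xor a b) (xor i j) \<longleftrightarrow> (x i \<noteq> x j)))"

definition hm_valid_strategy ::
  "nat \<Rightarrow> ((nat \<Rightarrow> bool) \<Rightarrow> nat) \<Rightarrow> (nat set set \<Rightarrow> (nat \<times> nat) \<times> nat) \<Rightarrow> bool" where
  "hm_valid_strategy k A B =
     ((\<forall>x\<in>hm_inputs (2^k). A x < 2^k) \<and>
      (\<forall>M\<in>perfect_matchings (2^k).
          {fst (fst (B M)), snd (fst (B M))} \<in> M \<and> snd (B M) < 2^k))"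

definition hm_win_prob ::
  "nat \<Rightarrow> ((nat \<Rightarrow> bool) \<Rightarrow> nat) \<Rightarrow> (nat set set \<Rightarrow> (nat \<times> nat) \<times> nat) \<Rightarrow> real" where
  "hm_win_prob k A B =
     (\<Sum>x\<in>hm_inputs (2^k). \<Sum>M\<in>perfect_matchings (2^k).
         if hm_wins k x (A x) (B M) then 1 else 0)
     / (real (card (hm_inputs (2^k))) * real (card (perfect_matchings (2^k))))"

text \<open>Classical value: supremum over deterministic strategies (shared randomness
  is a convex combination of these and cannot exceed it).\<close>
definition hm_classical_value :: "nat \<Rightarrow> real" where
  "hm_classical_value k = Sup {hm_win_prob k A B | A B. hm_valid_strategy k A B}"

end

theory Submission
  imports Defs "HOL-Probability.Hoeffding" "HOL-Combinatorics.Transposition"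
begin

(* Encode Alice's input as a sign vector y in {-1,1}^n. For a fixed answer a of Alice, averaging
   the winning indicator over the uniformly random matching turns her bias into a quadratic form
   sum_{i<j} W_a(j,i) y_i y_j whose squared Frobenius norm is at most 1/(n-1), since a fixed edge
   lies in exactly a 1/(n-1) fraction of all perfect matchings.  Such a Rademacher chaos Q satisfies
   E exp(t Q) <= exp(2 t^2 |W|^2) whenever t^2 |W|^2 <= 1/16: viewing Q as a martingale,
   Cauchy-Schwarz against the exponential supermartingale reduces it to its quadratic variation,
   which is again a chaos, of squared norm at most 2 |W|^4, and iterating drives an a-priori error
   term to zero.  With t = sqrt(n-1)/4 the soft-max bound over Alice's n possible answers gives a
   mean bias of at most 4 (ln n + 1/8) / sqrt(n-1). *)

section \<open>Averages over the discrete cube\<close>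

lemma cosh_le_exp_square_half: "cosh x \<le> exp (x\<^sup>2 / 2)" for x :: real
proof -
  have nonneg_case: "cosh x \<le> exp (x\<^sup>2 / 2)" if "x \<ge> 0" for x :: real
  proof -
    have "-(2*x) * (1/2) + ln (1 + (1/2) * (exp (2*x) - 1)) \<le> (2*x)\<^sup>2 / 8"
      using Hoeffdings_lemma_aux[of "2*x" "1/2"] that by simp
    hence "ln ((1 + exp (2*x)) / 2) \<le> x + x\<^sup>2 / 2"
      by (simp add: power2_eq_square field_simps)
    hence "(1 + exp (2*x)) / 2 \<le> exp (x + x\<^sup>2 / 2)"
      by (metis add_pos_pos divide_pos_pos exp_gt_zero exp_le_cancel_iff exp_ln zero_less_one
          zero_less_numeral)
    hence "exp (-x) * ((1 + exp (2*x)) / 2) \<le> exp (-x) * exp (x + x\<^sup>2 / 2)"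
      by simp
    thus ?thesis
      by (simp add: cosh_field_def field_simps flip: exp_add)
  qed
  show ?thesis
    using nonneg_case[of x] nonneg_case[of "-x"] by (cases "x \<ge> 0") auto
qed

definition spin :: "(nat \<Rightarrow> bool) \<Rightarrow> nat \<Rightarrow> real" where
  "spin x i = (if x i then -1 else 1)"

lemma spin_square [simp]: "(spin x i)\<^sup>2 = 1"
  by (simp add: spin_def)

lemma spin_upd: "spin (x(N := b)) = (spin x)(N := if b then -1 else 1)"
  by (simp add: spin_def fun_eq_iff)

text \<open>The uniform average over \<open>{-1, 1}\<^sup>N\<close>; the coordinates from \<open>N\<close> on are frozen at
  an unspecified sign (extensional functions are \<open>undefined\<close> outside their domain), so
  only the first \<open>N\<close> matter.\<close>
definition cube_mean :: "nat \<Rightarrow> ((nat \<Rightarrow> real) \<Rightarrow> real) \<Rightarrow> real" where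
  "cube_mean N f = (\<Sum>x\<in>{0..<N} \<rightarrow>\<^sub>E (UNIV :: bool set). f (spin x)) / 2 ^ N"

lemma sum_PiE_insert_bool:
  assumes "N \<notin> S" "finite S"
  shows "(\<Sum>x\<in>insert N S \<rightarrow>\<^sub>E (UNIV :: bool set). g x)
       = (\<Sum>x\<in>S \<rightarrow>\<^sub>E UNIV. g (x(N := True)) + g (x(N := False)))"
proof -
  have "inj_on (\<lambda>(b, x). x(N := b)) (UNIV \<times> (S \<rightarrow>\<^sub>E (UNIV :: bool set)))"
    using inj_combinator[of N S "\<lambda>_. UNIV :: bool set"] assms(1) by simp
  hence "(\<Sum>x\<in>insert N S \<rightarrow>\<^sub>E (UNIV :: bool set). g x)
       = (\<Sum>(b, x)\<in>UNIV \<times> (S \<rightarrow>\<^sub>E UNIV). g (x(N := b)))"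
    by (simp add: PiE_insert_eq sum.reindex case_prod_unfold)
  also have "\<dots> = (\<Sum>x\<in>S \<rightarrow>\<^sub>E UNIV. g (x(N := True)) + g (x(N := False)))"
    by (simp add: sum.cartesian_product[symmetric] UNIV_bool sum.distrib add.commute)
  finally show ?thesis .
qed

lemma cube_mean_Suc:
  "cube_mean (Suc N) f = cube_mean N (\<lambda>y. (f (y(N := 1)) + f (y(N := -1))) / 2)"
proof -
  have "{0..<Suc N} = insert N {0..<N}" by auto
  thus ?thesis
    unfolding cube_mean_def
    by (simp add: sum_PiE_insert_bool spin_upd sum_divide_distrib add.commute)
qed

lemma cube_mean_mono:
  "(\<And>x. f (spin x) \<le> g (spin x)) \<Longrightarrow> cube_mean N f \<le> cube_mean N g"
  unfolding cube_mean_def by (intro divide_right_mono sum_mono) auto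

lemma cube_mean_cong:
  "(\<And>x. f (spin x) = g (spin x)) \<Longrightarrow> cube_mean N f = cube_mean N g"
  unfolding cube_mean_def by simp

lemma cube_mean_const [simp]: "cube_mean N (\<lambda>_. c) = c"
  by (simp add: cube_mean_def card_PiE)

lemma cube_mean_nonneg: "(\<And>y. f y \<ge> 0) \<Longrightarrow> cube_mean N f \<ge> 0"
  unfolding cube_mean_def by (intro divide_nonneg_nonneg sum_nonneg) auto

lemma cube_mean_scale: "cube_mean N (\<lambda>y. c * f y) = c * cube_mean N f"
  by (simp add: cube_mean_def sum_distrib_left)

lemma cube_mean_Cauchy_Schwarz:
  "cube_mean N (\<lambda>y. f y * g y) \<le> sqrt (cube_mean N (\<lambda>y. (f y)\<^sup>2)) * sqrt (cube_mean N (\<lambda>y. (g y)\<^sup>2))"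
proof -
  let ?C = "{0..<N} \<rightarrow>\<^sub>E (UNIV :: bool set)"
  have "(\<Sum>x\<in>?C. f (spin x) * g (spin x))\<^sup>2
      \<le> (\<Sum>x\<in>?C. (f (spin x))\<^sup>2) * (\<Sum>x\<in>?C. (g (spin x))\<^sup>2)"
    by (rule Cauchy_Schwarz_ineq_sum)
  hence "(cube_mean N (\<lambda>y. f y * g y))\<^sup>2 \<le> cube_mean N (\<lambda>y. (f y)\<^sup>2) * cube_mean N (\<lambda>y. (g y)\<^sup>2)"
    unfolding cube_mean_def power_divide
    by (simp add: power2_eq_square[of "2 ^ N :: real"] divide_right_mono)
  thus ?thesis
    by (metis real_le_rsqrt real_sqrt_mult)
qed

section \<open>Rademacher chaos of order two\<close>

definition chaos_row :: "(nat \<Rightarrow> nat \<Rightarrow> real) \<Rightarrow> nat \<Rightarrow> (nat \<Rightarrow> real) \<Rightarrow> real" where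
  "chaos_row W j y = (\<Sum>i<j. W j i * y i)"

definition chaos :: "(nat \<Rightarrow> nat \<Rightarrow> real) \<Rightarrow> nat \<Rightarrow> (nat \<Rightarrow> real) \<Rightarrow> real" where
  "chaos W N y = (\<Sum>j<N. y j * chaos_row W j y)"

definition chaos_qvar :: "(nat \<Rightarrow> nat \<Rightarrow> real) \<Rightarrow> nat \<Rightarrow> (nat \<Rightarrow> real) \<Rightarrow> real" where
  "chaos_qvar W N y = (\<Sum>j<N. (chaos_row W j y)\<^sup>2)"

definition frob_sq :: "(nat \<Rightarrow> nat \<Rightarrow> real) \<Rightarrow> nat \<Rightarrow> real" where
  "frob_sq W N = (\<Sum>j<N. \<Sum>i<j. (W j i)\<^sup>2)"

definition qvar_kernel :: "(nat \<Rightarrow> nat \<Rightarrow> real) \<Rightarrow> nat \<Rightarrow> nat \<Rightarrow> nat \<Rightarrow> real" where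
  "qvar_kernel W N a b = 2 * (\<Sum>j\<in>{a<..<N}. W j a * W j b)"

lemma chaos_row_upd: "j \<le> N \<Longrightarrow> chaos_row W j (y(N := v)) = chaos_row W j y"
  unfolding chaos_row_def by (intro sum.cong) auto

lemma chaos_Suc_upd: "chaos W (Suc N) (y(N := v)) = chaos W N y + v * chaos_row W N y"
  unfolding chaos_def by (auto simp: chaos_row_upd intro!: sum.cong)

lemma chaos_qvar_Suc_upd:
  "chaos_qvar W (Suc N) (y(N := v)) = chaos_qvar W N y + (chaos_row W N y)\<^sup>2"
  unfolding chaos_qvar_def by (auto simp: chaos_row_upd intro!: sum.cong)

lemma frob_sq_nonneg: "frob_sq W N \<ge> 0"
  unfolding frob_sq_def by (intro sum_nonneg) auto

text \<open>As a function of \<open>N\<close>, \<open>chaos W N\<close> is a martingale with predictable quadratic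
  variation \<open>chaos_qvar W N\<close>; this is the mean of the corresponding exponential
  supermartingale, each step being \<open>cosh_le_exp_square_half\<close>.\<close>
lemma cube_mean_exp_chaos_compensated:
  "cube_mean N (\<lambda>y. exp (\<mu> * chaos W N y - \<mu>\<^sup>2 / 2 * chaos_qvar W N y)) \<le> 1"
proof -
  define G where "G N y = exp (\<mu> * chaos W N y - \<mu>\<^sup>2 / 2 * chaos_qvar W N y)" for N y
  have G_upd: "G (Suc N) (y(N := v)) = G N y * exp (v * L - L\<^sup>2 / 2)"
    if "L = \<mu> * chaos_row W N y" for N y v L
    unfolding G_def that chaos_Suc_upd chaos_qvar_Suc_upd
    by (simp add: algebra_simps power_mult_distrib flip: exp_add)
  have increment: "(exp (L - L\<^sup>2 / 2) + exp (- L - L\<^sup>2 / 2)) / 2 \<le> 1" for L :: real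
  proof -
    have "(exp (L - L\<^sup>2 / 2) + exp (- L - L\<^sup>2 / 2)) / 2 = cosh L * exp (- (L\<^sup>2 / 2))"
      by (simp add: cosh_field_def field_simps flip: exp_add)
    also have "\<dots> \<le> exp (L\<^sup>2 / 2) * exp (- (L\<^sup>2 / 2))"
      by (intro mult_right_mono cosh_le_exp_square_half) simp
    finally show ?thesis
      by (simp flip: exp_add)
  qed
  have "cube_mean N (G N) \<le> 1"
  proof (induction N)
    case 0
    show ?case by (simp add: G_def chaos_def chaos_qvar_def)
  next
    case (Suc N)
    have "cube_mean (Suc N) (G (Suc N)) \<le> cube_mean N (G N)"
      unfolding cube_mean_Suc
    proof (rule cube_mean_mono)
      fix x
      let ?L = "\<mu> * chaos_row W N (spin x)"
      have "(G (Suc N) ((spin x)(N := 1)) + G (Suc N) ((spin x)(N := -1))) / 2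
          = G N (spin x) * ((exp (?L - ?L\<^sup>2 / 2) + exp (- ?L - ?L\<^sup>2 / 2)) / 2)"
        by (simp add: G_upd[OF refl] distrib_left)
      also have "\<dots> \<le> G N (spin x)"
        using increment[of ?L] by (intro mult_left_le) (simp_all add: G_def)
      finally show "(G (Suc N) ((spin x)(N := 1)) + G (Suc N) ((spin x)(N := -1))) / 2 \<le> G N (spin x)" .
    qed
    with Suc.IH show ?case by linarith
  qed
  then show ?thesis unfolding G_def[abs_def] .
qed

lemma square_sum_lower_triangle:
  "(\<Sum>i<j. c i)\<^sup>2 = (\<Sum>i<j. (c i)\<^sup>2) + 2 * (\<Sum>i<j. \<Sum>i'<i. c i * c i')" for c :: "nat \<Rightarrow> real"
  by (induction j) (auto simp: power2_eq_square algebra_simps sum_distrib_left sum_distrib_right)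

lemma sum_lower_triangle_swap:
  "(\<Sum>j<N. \<Sum>i<j. G j i) = (\<Sum>i<N. \<Sum>j\<in>{i<..<N}. G j i)" for G :: "nat \<Rightarrow> nat \<Rightarrow> 'a::comm_monoid_add"
proof -
  have "(\<Sum>j<N. \<Sum>i<j. G j i) = (\<Sum>j<N. \<Sum>i | i \<in> {..<N} \<and> i < j. G j i)"
    by (intro sum.cong) auto
  also have "\<dots> = (\<Sum>i<N. \<Sum>j | j \<in> {..<N} \<and> i < j. G j i)"
    by (rule sum.swap_restrict) auto
  also have "\<dots> = (\<Sum>i<N. \<Sum>j\<in>{i<..<N}. G j i)"
    by (intro sum.cong) auto
  finally show ?thesis .
qed

lemma chaos_qvar_spin:
  "chaos_qvar W N (spin x) = frob_sq W N + chaos (qvar_kernel W N) N (spin x)"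
proof -
  let ?y = "spin x"
  have "chaos_qvar W N ?y
      = (\<Sum>j<N. (\<Sum>i<j. (W j i)\<^sup>2) + 2 * (\<Sum>i<j. \<Sum>i'<i. W j i * ?y i * (W j i' * ?y i')))"
    unfolding chaos_qvar_def chaos_row_def square_sum_lower_triangle
    by (simp add: power_mult_distrib)
  also have "\<dots> = frob_sq W N + 2 * (\<Sum>j<N. \<Sum>i<j. \<Sum>i'<i. W j i * ?y i * (W j i' * ?y i'))"
    unfolding frob_sq_def by (simp add: sum.distrib sum_distrib_left)
  also have "(\<Sum>j<N. \<Sum>i<j. \<Sum>i'<i. W j i * ?y i * (W j i' * ?y i'))
      = (\<Sum>i<N. \<Sum>j\<in>{i<..<N}. \<Sum>i'<i. W j i * ?y i * (W j i' * ?y i'))"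
    by (rule sum_lower_triangle_swap)
  also have "2 * \<dots> = chaos (qvar_kernel W N) N ?y"
  proof -
    have "2 * (\<Sum>j\<in>{a<..<N}. \<Sum>i'<a. W j a * ?y a * (W j i' * ?y i'))
        = ?y a * chaos_row (qvar_kernel W N) a ?y" for a
      unfolding chaos_row_def qvar_kernel_def
      by (subst sum.swap) (simp add: sum_distrib_left sum_distrib_right mult_ac)
    then show ?thesis
      unfolding chaos_def sum_distrib_left by simp
  qed
  finally show ?thesis .
qed

lemma frob_sq_qvar_kernel: "frob_sq (qvar_kernel W N) N \<le> 2 * (frob_sq W N)\<^sup>2"
proof -
  define c where "c a = (\<Sum>j\<in>{a<..<N}. (W j a)\<^sup>2)" for a
  have c_nonneg: "c a \<ge> 0" for a unfolding c_def by (intro sum_nonneg) auto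
  have frob_c: "frob_sq W N = (\<Sum>a<N. c a)"
    unfolding frob_sq_def c_def by (rule sum_lower_triangle_swap)
  have "frob_sq (qvar_kernel W N) N = (\<Sum>a<N. \<Sum>b<a. 4 * (\<Sum>j\<in>{a<..<N}. W j a * W j b)\<^sup>2)"
    unfolding frob_sq_def qvar_kernel_def by (simp add: power_mult_distrib)
  also have "\<dots> \<le> (\<Sum>a<N. \<Sum>b<a. 4 * (c a * c b))"
  proof (intro sum_mono mult_left_mono)
    fix a b :: nat assume "b \<in> {..<a}"
    have "(\<Sum>j\<in>{a<..<N}. W j a * W j b)\<^sup>2 \<le> c a * (\<Sum>j\<in>{a<..<N}. (W j b)\<^sup>2)"
      unfolding c_def by (rule Cauchy_Schwarz_ineq_sum)
    also have "\<dots> \<le> c a * c b"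
      unfolding c_def using \<open>b \<in> {..<a}\<close>
      by (intro mult_left_mono sum_mono2 sum_nonneg) auto
    finally show "(\<Sum>j\<in>{a<..<N}. W j a * W j b)\<^sup>2 \<le> c a * c b" .
  qed simp
  also have "\<dots> \<le> 2 * (\<Sum>a<N. c a)\<^sup>2"
    unfolding square_sum_lower_triangle
    by (simp add: sum_distrib_left sum_nonneg)
  finally show ?thesis unfolding frob_c .
qed

lemma abs_chaos_spin_le: "\<bar>chaos W N (spin x)\<bar> \<le> (real N)\<^sup>2 * sqrt (frob_sq W N)"
proof -
  have entry: "\<bar>W j i\<bar> \<le> sqrt (frob_sq W N)" if "i < j" "j < N" for i j
  proof -
    have "(W j i)\<^sup>2 \<le> (\<Sum>i<j. (W j i)\<^sup>2)"
      using that by (intro member_le_sum) auto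
    also have "\<dots> \<le> frob_sq W N"
      unfolding frob_sq_def using that
      by (intro member_le_sum[of j "{..<N}" "\<lambda>j. \<Sum>i<j. (W j i)\<^sup>2"]) (auto intro: sum_nonneg)
    finally show ?thesis by (simp add: real_le_rsqrt)
  qed
  have "\<bar>chaos W N (spin x)\<bar> \<le> (\<Sum>j<N. \<Sum>i<j. \<bar>W j i\<bar>)"
    unfolding chaos_def chaos_row_def sum_distrib_left
    by (rule order_trans[OF sum_abs sum_mono], rule order_trans[OF sum_abs sum_mono])
      (simp add: abs_mult spin_def)
  also have "\<dots> \<le> (\<Sum>j<N. \<Sum>i<N. sqrt (frob_sq W N))"
    by (intro sum_mono order_trans[OF sum_mono sum_mono2]) (auto intro: entry frob_sq_nonneg)
  also have "\<dots> = (real N)\<^sup>2 * sqrt (frob_sq W N)"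
    by (simp add: power2_eq_square)
  finally show ?thesis .
qed

lemma sqrt_exp: "sqrt (exp z) = exp (z / 2)"
  by (rule real_sqrt_unique) (simp_all add: power2_eq_square flip: exp_add)

text \<open>Cauchy--Schwarz against the compensated exponential, whose mean is at most 1.\<close>
lemma cube_mean_exp_chaos_le_sqrt:
  "cube_mean N (\<lambda>y. exp (t * chaos W N y))
     \<le> sqrt (cube_mean N (\<lambda>y. exp (2 * t\<^sup>2 * chaos_qvar W N y)))"
proof -
  have compensated: "cube_mean N (\<lambda>y. (exp (t * chaos W N y - t\<^sup>2 * chaos_qvar W N y))\<^sup>2) \<le> 1"
    using cube_mean_exp_chaos_compensated[of N "2 * t" W]
    unfolding exp_double[symmetric] by (simp add: power2_eq_square algebra_simps)
  have "cube_mean N (\<lambda>y. exp (t * chaos W N y))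
      = cube_mean N (\<lambda>y. exp (t * chaos W N y - t\<^sup>2 * chaos_qvar W N y) * exp (t\<^sup>2 * chaos_qvar W N y))"
    by (simp flip: exp_add)
  also have "\<dots> \<le> sqrt (cube_mean N (\<lambda>y. (exp (t * chaos W N y - t\<^sup>2 * chaos_qvar W N y))\<^sup>2))
      * sqrt (cube_mean N (\<lambda>y. (exp (t\<^sup>2 * chaos_qvar W N y))\<^sup>2))"
    by (rule cube_mean_Cauchy_Schwarz)
  also have "\<dots> \<le> sqrt (cube_mean N (\<lambda>y. (exp (t\<^sup>2 * chaos_qvar W N y))\<^sup>2))"
    using compensated by (intro mult_left_le_one_le real_sqrt_ge_zero cube_mean_nonneg) simp_all
  finally show ?thesis
    by (simp add: exp_double[symmetric] mult.assoc)
qed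

lemma cube_mean_exp_chaos_qvar:
  "cube_mean N (\<lambda>y. exp (s * chaos_qvar W N y))
     = exp (s * frob_sq W N) * cube_mean N (\<lambda>y. exp (s * chaos (qvar_kernel W N) N y))"
proof -
  have "cube_mean N (\<lambda>y. exp (s * chaos_qvar W N y))
      = cube_mean N (\<lambda>y. exp (s * frob_sq W N) * exp (s * chaos (qvar_kernel W N) N y))"
    by (rule cube_mean_cong) (simp add: chaos_qvar_spin distrib_left flip: exp_add)
  then show ?thesis by (simp add: cube_mean_scale)
qed

lemma cube_mean_exp_chaos_crude:
  "cube_mean N (\<lambda>y. exp (t * chaos W N y)) \<le> exp ((real N)\<^sup>2 * (\<bar>t\<bar> * sqrt (frob_sq W N)))"
proof -
  have "t * chaos W N (spin x) \<le> (real N)\<^sup>2 * (\<bar>t\<bar> * sqrt (frob_sq W N))" for x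
  proof -
    have "t * chaos W N (spin x) \<le> \<bar>t\<bar> * \<bar>chaos W N (spin x)\<bar>"
      by (simp add: abs_mult[symmetric])
    also have "\<dots> \<le> \<bar>t\<bar> * ((real N)\<^sup>2 * sqrt (frob_sq W N))"
      by (intro mult_left_mono abs_chaos_spin_le) simp
    finally show ?thesis by (simp add: mult_ac)
  qed
  then have "cube_mean N (\<lambda>y. exp (t * chaos W N y))
      \<le> cube_mean N (\<lambda>y. exp ((real N)\<^sup>2 * (\<bar>t\<bar> * sqrt (frob_sq W N))))"
    by (intro cube_mean_mono) simp
  then show ?thesis by simp
qed

text \<open>Replacing \<open>t\<close> and \<open>W\<close> by \<open>s = 2 t\<^sup>2\<close> and \<open>qvar_kernel W N\<close>
  shrinks both \<open>t\<^sup>2 frob_sq W N\<close> and \<open>|t| sqrt (frob_sq W N)\<close>.\<close>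
lemma qvar_parameter_bounds:
  fixes t F F' :: real
  assumes F_nonneg: "F \<ge> 0" and F'_le: "F' \<le> 2 * F\<^sup>2" and small: "t\<^sup>2 * F \<le> 1 / 16"
  shows "(2 * t\<^sup>2)\<^sup>2 * F' \<le> t\<^sup>2 * F / 2" and "\<bar>2 * t\<^sup>2\<bar> * sqrt F' \<le> \<bar>t\<bar> * sqrt F"
proof -
  define u where "u = \<bar>t\<bar> * sqrt F"
  have u_nonneg: "u \<ge> 0" unfolding u_def using F_nonneg by simp
  have u_sq: "u\<^sup>2 = t\<^sup>2 * F" unfolding u_def using F_nonneg by (simp add: power_mult_distrib)
  have "u\<^sup>2 \<le> (1 / 4)\<^sup>2" using u_sq small by (simp add: power_divide)
  then have u_le: "u \<le> 1 / 4" by (rule power2_le_imp_le) simp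
  have "(2 * t\<^sup>2)\<^sup>2 * F' \<le> (2 * t\<^sup>2)\<^sup>2 * (2 * F\<^sup>2)" by (intro mult_left_mono F'_le) simp
  also have "\<dots> = 8 * (t\<^sup>2 * F) * (t\<^sup>2 * F)" by (simp add: power2_eq_square)
  also have "\<dots> \<le> 8 * (t\<^sup>2 * F) * (1 / 16)" by (intro mult_left_mono small) (simp add: F_nonneg)
  finally show "(2 * t\<^sup>2)\<^sup>2 * F' \<le> t\<^sup>2 * F / 2" by (simp add: mult.commute)
  have "F' \<le> (2 * F)\<^sup>2"
    using F'_le by (simp add: power_mult_distrib) (use zero_le_power2[of F] in linarith)
  then have "sqrt F' \<le> 2 * F"
    using F_nonneg by (intro real_le_lsqrt) simp_all
  from mult_left_mono[OF this, of "2 * t\<^sup>2"]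
  have "\<bar>2 * t\<^sup>2\<bar> * sqrt F' \<le> 2 * t\<^sup>2 * (2 * F)"
    by simp
  also have "\<dots> = 4 * u * u" using u_sq by (simp add: power2_eq_square)
  also have "\<dots> \<le> 4 * u * (1 / 4)"
    using u_le u_nonneg by (intro mult_left_mono) simp_all
  finally show "\<bar>2 * t\<^sup>2\<bar> * sqrt F' \<le> \<bar>t\<bar> * sqrt F" by (simp add: u_def)
qed

text \<open>Bootstrapping: the a-priori error term of \<open>cube_mean_exp_chaos_crude\<close> is halved
  at each passage to the quadratic variation.\<close>
lemma cube_mean_exp_chaos_approx:
  assumes "t\<^sup>2 * frob_sq W N \<le> 1 / 16"
  shows "cube_mean N (\<lambda>y. exp (t * chaos W N y))
    \<le> exp (2 * t\<^sup>2 * frob_sq W N + (real N)\<^sup>2 * (\<bar>t\<bar> * sqrt (frob_sq W N)) / 2 ^ r)"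
  using assms
proof (induction r arbitrary: W t)
  case 0
  have "exp ((real N)\<^sup>2 * (\<bar>t\<bar> * sqrt (frob_sq W N)))
      \<le> exp (2 * t\<^sup>2 * frob_sq W N + (real N)\<^sup>2 * (\<bar>t\<bar> * sqrt (frob_sq W N)) / 2 ^ 0)"
    by (simp add: frob_sq_nonneg)
  with cube_mean_exp_chaos_crude[of N t W] show ?case
    by (rule order_trans)
next
  case (Suc r)
  define F where "F = frob_sq W N"
  define F' where "F' = frob_sq (qvar_kernel W N) N"
  define s where "s = 2 * t\<^sup>2"
  define R where "R = (real N)\<^sup>2 * (\<bar>s\<bar> * sqrt F') / 2 ^ r"
  have small: "t\<^sup>2 * F \<le> 1 / 16" using Suc.prems unfolding F_def .
  note bounds = qvar_parameter_bounds[OF frob_sq_nonneg frob_sq_qvar_kernel Suc.prems,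
      folded s_def F_def F'_def]
  have "cube_mean N (\<lambda>y. exp (t * chaos W N y))
      \<le> sqrt (exp (s * F) * cube_mean N (\<lambda>y. exp (s * chaos (qvar_kernel W N) N y)))"
    using cube_mean_exp_chaos_le_sqrt[of N t W] cube_mean_exp_chaos_qvar[of N s W]
    unfolding s_def F_def by simp
  also have "\<dots> \<le> sqrt (exp (s * F) * exp (2 * s\<^sup>2 * F' + R))"
    using Suc.IH[of s "qvar_kernel W N"] bounds(1) small
    unfolding F'_def R_def by (intro real_sqrt_le_mono mult_left_mono) simp_all
  also have "\<dots> = exp (t\<^sup>2 * F + s\<^sup>2 * F' + R / 2)"
    unfolding s_def by (simp add: sqrt_exp add_divide_distrib flip: exp_add)
  also have "\<dots> \<le> exp (2 * t\<^sup>2 * F + (real N)\<^sup>2 * (\<bar>t\<bar> * sqrt F) / 2 ^ Suc r)"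
  proof -
    have "R / 2 = (real N)\<^sup>2 * (\<bar>s\<bar> * sqrt F') / 2 ^ Suc r"
      unfolding R_def by simp
    also have "\<dots> \<le> (real N)\<^sup>2 * (\<bar>t\<bar> * sqrt F) / 2 ^ Suc r"
      by (intro divide_right_mono mult_left_mono bounds(2)) simp_all
    finally have "R / 2 \<le> (real N)\<^sup>2 * (\<bar>t\<bar> * sqrt F) / 2 ^ Suc r" .
    moreover have "0 \<le> t\<^sup>2 * F" unfolding F_def by (simp add: frob_sq_nonneg)
    ultimately show ?thesis
      unfolding exp_le_cancel_iff using bounds(1) by linarith
  qed
  finally show ?case unfolding F_def .
qed

lemma cube_mean_exp_chaos_le:
  assumes "t\<^sup>2 * frob_sq W N \<le> 1 / 16"
  shows "cube_mean N (\<lambda>y. exp (t * chaos W N y)) \<le> exp (2 * t\<^sup>2 * frob_sq W N)"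
proof -
  define c where "c = (real N)\<^sup>2 * (\<bar>t\<bar> * sqrt (frob_sq W N))"
  have "(\<lambda>r. exp (2 * t\<^sup>2 * frob_sq W N + c / 2 ^ r)) \<longlonglongrightarrow> exp (2 * t\<^sup>2 * frob_sq W N + 0)"
    by (intro tendsto_intros LIMSEQ_divide_realpow_zero) simp
  then show ?thesis
    using cube_mean_exp_chaos_approx[OF assms] unfolding c_def
    by (intro LIMSEQ_le_const) auto
qed

section \<open>Perfect matchings\<close>

lemma perfect_matchingsD:
  assumes "M \<in> perfect_matchings n"
  shows perfect_matching_edge: "\<And>e. e \<in> M \<Longrightarrow> \<exists>i j. i \<noteq> j \<and> e = {i, j}"
    and perfect_matching_disjoint: "\<And>e e'. e \<in> M \<Longrightarrow> e' \<in> M \<Longrightarrow> e \<noteq> e' \<Longrightarrow> e \<inter> e' = {}"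
    and perfect_matching_Union: "\<Union>M = {0..<n}"
  using assms unfolding perfect_matchings_def by simp_all

lemma perfect_matchings_finite: "finite (perfect_matchings n)"
proof (rule finite_subset)
  show "perfect_matchings n \<subseteq> Pow (Pow {0..<n})"
    using perfect_matching_Union by blast
qed simp

lemma perfect_matching_edgeD:
  assumes M: "M \<in> perfect_matchings n" and e: "{i, j} \<in> M"
  shows "i \<noteq> j" "i < n" "j < n"
proof -
  obtain p q where "p \<noteq> q" "{i, j} = {p, q}"
    using perfect_matching_edge[OF M e] by blast
  then show "i \<noteq> j" by (auto simp: doubleton_eq_iff)
  have "{i, j} \<subseteq> \<Union>M" using e by blast
  then show "i < n" "j < n"
    unfolding perfect_matching_Union[OF M] by simp_all
qed

lemma perfect_matching_partner:
  assumes M: "M \<in> perfect_matchings n" and "i < n"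
  shows "\<exists>!j. {i, j} \<in> M"
proof -
  have "i \<in> \<Union>M" using perfect_matching_Union[OF M] \<open>i < n\<close> by simp
  then obtain e where "e \<in> M" "i \<in> e" by blast
  moreover obtain p q where "e = {p, q}"
    using perfect_matching_edge[OF M \<open>e \<in> M\<close>] by blast
  ultimately obtain j where j: "{i, j} \<in> M"
    by (metis insert_commute insert_iff singletonD)
  have "j' = j" if j': "{i, j'} \<in> M" for j'
  proof -
    have "{i, j'} = {i, j}"
      using perfect_matching_disjoint[OF M j' j] by blast
    then show ?thesis
      using perfect_matching_edgeD(1)[OF M j] by (auto simp: doubleton_eq_iff)
  qed
  with j show ?thesis by blast
qed

lemma perfect_matchings_image:
  assumes M: "M \<in> perfect_matchings n" and "inj \<sigma>" and range: "\<sigma> ` {0..<n} = {0..<n}"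
  shows "image \<sigma> ` M \<in> perfect_matchings n"
proof -
  have "\<forall>e\<in>image \<sigma> ` M. \<exists>i j. i \<noteq> j \<and> e = {i, j}"
  proof
    fix e assume "e \<in> image \<sigma> ` M"
    then obtain e\<^sub>0 where "e\<^sub>0 \<in> M" "e = \<sigma> ` e\<^sub>0" by blast
    moreover obtain p q where "p \<noteq> q" "e\<^sub>0 = {p, q}"
      using perfect_matching_edge[OF M \<open>e\<^sub>0 \<in> M\<close>] by blast
    ultimately show "\<exists>i j. i \<noteq> j \<and> e = {i, j}"
      using injD[OF \<open>inj \<sigma>\<close>] by blast
  qed
  moreover have "\<forall>e\<in>image \<sigma> ` M. \<forall>e'\<in>image \<sigma> ` M. e \<noteq> e' \<longrightarrow> e \<inter> e' = {}"
  proof (intro ballI impI)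
    fix e e' assume "e \<in> image \<sigma> ` M" "e' \<in> image \<sigma> ` M" "e \<noteq> e'"
    then obtain e\<^sub>0 e\<^sub>0' where "e\<^sub>0 \<in> M" "e\<^sub>0' \<in> M" "e = \<sigma> ` e\<^sub>0" "e' = \<sigma> ` e\<^sub>0'" "e\<^sub>0 \<noteq> e\<^sub>0'"
      by blast
    then show "e \<inter> e' = {}"
      using perfect_matching_disjoint[OF M] image_Int[OF \<open>inj \<sigma>\<close>] by (metis image_empty)
  qed
  moreover have "\<Union>(image \<sigma> ` M) = {0..<n}"
    using perfect_matching_Union[OF M] range by (simp add: image_Union[symmetric])
  ultimately show ?thesis
    unfolding perfect_matchings_def by blast
qed

lemma card_perfect_matchings_containing_eq:
  assumes "i < n" "j < n" "j' < n" "i \<noteq> j" "i \<noteq> j'"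
  shows "card {M \<in> perfect_matchings n. {i, j} \<in> M} = card {M \<in> perfect_matchings n. {i, j'} \<in> M}"
proof -
  define \<tau> where "\<tau> = Transposition.transpose j j'"
  have \<tau>_inj: "inj \<tau>" unfolding \<tau>_def by (rule inj_transpose)
  have \<tau>_range: "\<tau> ` {0..<n} = {0..<n}" unfolding \<tau>_def using assms by simp
  have \<tau>_edge: "\<tau> ` {i, j} = {i, j'}" "\<tau> ` {i, j'} = {i, j}" unfolding \<tau>_def using assms by auto
  have involution: "image (image \<tau>) (image (image \<tau>) M) = M" for M
    unfolding \<tau>_def by (simp add: image_image)
  have maps_to: "image (image \<tau>) M \<in> {M \<in> perfect_matchings n. {i, b} \<in> M}"
    if "\<tau> ` {i, a} = {i, b}" "M \<in> {M \<in> perfect_matchings n. {i, a} \<in> M}" for a b M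
  proof -
    from that(2) have "M \<in> perfect_matchings n" "{i, a} \<in> M" by simp_all
    then have "image (image \<tau>) M \<in> perfect_matchings n" "{i, b} \<in> image (image \<tau>) M"
      using perfect_matchings_image[OF _ \<tau>_inj \<tau>_range] image_eqI[where f = "image \<tau>", OF that(1)[symmetric]] by simp_all
    then show ?thesis by simp
  qed
  show ?thesis
  proof (rule bij_betw_same_card[of "image (image \<tau>)"],
         rule bij_betw_byWitness[where f' = "image (image \<tau>)"])
    show "image (image \<tau>) ` {M \<in> perfect_matchings n. {i, j} \<in> M}
        \<subseteq> {M \<in> perfect_matchings n. {i, j'} \<in> M}"
      using maps_to[OF \<tau>_edge(1)] by blast
    show "image (image \<tau>) ` {M \<in> perfect_matchings n. {i, j'} \<in> M}
        \<subseteq> {M \<in> perfect_matchings n. {i, j} \<in> M}"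
      using maps_to[OF \<tau>_edge(2)] by blast
  qed (simp_all add: involution)
qed

text \<open>Double counting: every perfect matching contains exactly one edge at \<open>i\<close>, and by
  symmetry each of the \<open>n - 1\<close> possible edges is equally frequent.\<close>
lemma card_perfect_matchings_containing:
  assumes "i < n" "j < n" "i \<noteq> j"
  shows "card {M \<in> perfect_matchings n. {i, j} \<in> M} * (n - 1) = card (perfect_matchings n)"
proof -
  let ?P = "perfect_matchings n" and ?J = "{0..<n} - {i}"
  have one_partner: "card {j' \<in> ?J. {i, j'} \<in> M} = 1" if M: "M \<in> ?P" for M
  proof -
    obtain j where j: "{i, j} \<in> M" and unique: "\<And>j'. {i, j'} \<in> M \<Longrightarrow> j' = j"
      using perfect_matching_partner[OF M \<open>i < n\<close>] by blast
    have "{j' \<in> ?J. {i, j'} \<in> M} = {j}"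
    proof (intro equalityI subsetI)
      show "j' \<in> {j}" if "j' \<in> {j' \<in> ?J. {i, j'} \<in> M}" for j'
        using that unique by simp
      show "j' \<in> {j' \<in> ?J. {i, j'} \<in> M}" if "j' \<in> {j}" for j'
        using that j perfect_matching_edgeD[OF M j] by simp
    qed
    then show ?thesis by simp
  qed
  have "card ?P = (\<Sum>M\<in>?P. card {j' \<in> ?J. {i, j'} \<in> M})"
    unfolding card_eq_sum[of ?P] by (intro sum.cong refl one_partner[symmetric])
  also have "\<dots> = (\<Sum>j'\<in>?J. card {M \<in> ?P. {i, j'} \<in> M})"
    unfolding card_eq_sum
    by (rule sum.swap_restrict) (simp_all only: perfect_matchings_finite finite_Diff finite_atLeastLessThan)
  also have "\<dots> = (\<Sum>j'\<in>?J. card {M \<in> ?P. {i, j} \<in> M})"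
    using assms by (intro sum.cong refl card_perfect_matchings_containing_eq) auto
  also have "\<dots> = (n - 1) * card {M \<in> ?P. {i, j} \<in> M}"
    using assms by simp
  finally show ?thesis by simp
qed

section \<open>Quadratic forms supported on edges\<close>

definition pair_kernel :: "('m \<Rightarrow> nat \<times> nat) \<Rightarrow> ('m \<Rightarrow> real) \<Rightarrow> 'm set \<Rightarrow> nat \<Rightarrow> nat \<Rightarrow> real" where
  "pair_kernel e s P j i = (\<Sum>M\<in>P. if {fst (e M), snd (e M)} = {i, j} then s M else 0)"

lemma sum_lower_triangle_doubleton:
  fixes f :: "nat \<Rightarrow> nat \<Rightarrow> real"
  assumes "p \<noteq> q" "p < N" "q < N"
  shows "(\<Sum>j<N. \<Sum>i<j. if {p, q} = {i, j} then f i j else 0) = f (min p q) (max p q)"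
proof -
  have "(if {p, q} = {i, j} then f i j else 0) = (if j = max p q \<and> i = min p q then f i j else 0)"
    if "i < j" for i j
    using that \<open>p \<noteq> q\<close> by (auto simp: doubleton_eq_iff min_def max_def)
  then have "(\<Sum>j<N. \<Sum>i<j. if {p, q} = {i, j} then f i j else 0)
      = (\<Sum>j<N. if j = max p q then (\<Sum>i<j. if i = min p q then f i j else 0) else 0)"
    by (intro sum.cong refl) auto
  also have "\<dots> = f (min p q) (max p q)"
    using assms by (simp add: sum.delta min_def max_def)
  finally show ?thesis .
qed

lemma chaos_pair_kernel:
  assumes "finite P"
    and edges: "\<And>M. M \<in> P \<Longrightarrow> fst (e M) \<noteq> snd (e M) \<and> fst (e M) < N \<and> snd (e M) < N"
  shows "chaos (pair_kernel e s P) N y = (\<Sum>M\<in>P. s M * y (fst (e M)) * y (snd (e M)))"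
proof -
  have "y j * (pair_kernel e s P j i * y i)
      = (\<Sum>M\<in>P. if {fst (e M), snd (e M)} = {i, j} then s M * y i * y j else 0)" for i j
    unfolding pair_kernel_def by (auto simp: sum_distrib_left sum_distrib_right intro!: sum.cong)
  then have "chaos (pair_kernel e s P) N y
      = (\<Sum>j<N. \<Sum>i<j. \<Sum>M\<in>P. if {fst (e M), snd (e M)} = {i, j} then s M * y i * y j else 0)"
    unfolding chaos_def chaos_row_def sum_distrib_left by simp
  also have "\<dots> = (\<Sum>M\<in>P. \<Sum>j<N. \<Sum>i<j. if {fst (e M), snd (e M)} = {i, j} then s M * y i * y j else 0)"
    by (simp add: sum.swap[of _ "{..<_}" P])
  also have "\<dots> = (\<Sum>M\<in>P. s M * y (fst (e M)) * y (snd (e M)))"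
  proof (intro sum.cong refl)
    fix M assume "M \<in> P"
    with edges show "(\<Sum>j<N. \<Sum>i<j. if {fst (e M), snd (e M)} = {i, j} then s M * y i * y j else 0)
        = s M * y (fst (e M)) * y (snd (e M))"
      by (simp add: sum_lower_triangle_doubleton min_def max_def mult_ac)
  qed
  finally show ?thesis .
qed

lemma frob_sq_pair_kernel_le:
  assumes "finite P"
    and edges: "\<And>M. M \<in> P \<Longrightarrow> fst (e M) \<noteq> snd (e M) \<and> fst (e M) < N \<and> snd (e M) < N"
    and weights: "\<And>M. M \<in> P \<Longrightarrow> \<bar>s M\<bar> \<le> \<sigma>"
    and multiplicity: "\<And>i j. i < j \<Longrightarrow> j < N \<Longrightarrow>
      real (card {M \<in> P. {fst (e M), snd (e M)} = {i, j}}) \<le> c"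
  shows "frob_sq (pair_kernel e s P) N \<le> \<sigma>\<^sup>2 * c * card P"
proof -
  define D where "D = pair_kernel e (\<lambda>_. 1) P"
  have D_card: "D j i = real (card {M \<in> P. {fst (e M), snd (e M)} = {i, j}})" for i j
    unfolding D_def pair_kernel_def real_of_card sum.inter_filter[OF \<open>finite P\<close>] ..
  have abs_le: "\<bar>pair_kernel e s P j i\<bar> \<le> \<sigma> * D j i" for i j
  proof -
    have "\<bar>pair_kernel e s P j i\<bar> \<le> (\<Sum>M\<in>P. if {fst (e M), snd (e M)} = {i, j} then \<bar>s M\<bar> else 0)"
      unfolding pair_kernel_def by (rule order_trans[OF sum_abs], intro sum_mono) simp
    also have "\<dots> \<le> (\<Sum>M\<in>P. if {fst (e M), snd (e M)} = {i, j} then \<sigma> else 0)"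
      using weights by (intro sum_mono) simp
    finally show ?thesis
      unfolding D_def pair_kernel_def sum_distrib_left by (simp add: if_distrib cong: if_cong)
  qed
  have "(pair_kernel e s P j i)\<^sup>2 \<le> \<sigma>\<^sup>2 * c * D j i" if "i < j" "j < N" for i j
  proof -
    have "(pair_kernel e s P j i)\<^sup>2 \<le> (\<sigma> * D j i)\<^sup>2"
      using abs_le[of j i] by (metis abs_ge_zero order_trans power2_abs power_mono)
    also have "\<dots> = \<sigma>\<^sup>2 * (D j i * D j i)" by (simp add: power2_eq_square)
    also have "\<dots> \<le> \<sigma>\<^sup>2 * (c * D j i)"
      using multiplicity[OF that] by (intro mult_left_mono mult_right_mono) (simp_all add: D_card)
    finally show ?thesis by (simp add: mult.assoc)
  qed
  then have "frob_sq (pair_kernel e s P) N \<le> (\<Sum>j<N. \<Sum>i<j. \<sigma>\<^sup>2 * c * D j i)"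
    unfolding frob_sq_def by (intro sum_mono) auto
  also have "\<dots> = \<sigma>\<^sup>2 * c * chaos D N (\<lambda>_. 1)"
    unfolding chaos_def chaos_row_def by (simp add: sum_distrib_left)
  also have "chaos D N (\<lambda>_. 1) = card P"
    unfolding D_def by (simp add: chaos_pair_kernel[OF \<open>finite P\<close> edges])
  finally show ?thesis .
qed

section \<open>The soft-max bound\<close>

lemma exp_mean_le_mean_exp:
  fixes f :: "'a \<Rightarrow> real"
  assumes "finite X" "X \<noteq> {}"
  shows "exp ((\<Sum>x\<in>X. f x) / card X) \<le> (\<Sum>x\<in>X. exp (f x)) / card X"
proof -
  define m where "m = (\<Sum>x\<in>X. f x) / card X"
  have card_pos: "real (card X) > 0" using assms by (simp add: card_gt_0_iff)
  have "exp m * (1 + (f x - m)) \<le> exp m * exp (f x - m)" for x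
    by (intro mult_left_mono exp_ge_add_one_self) simp
  then have "exp m * (1 + (f x - m)) \<le> exp (f x)" for x
    by (simp add: exp_diff)
  then have "(\<Sum>x\<in>X. exp m * (1 + (f x - m))) \<le> (\<Sum>x\<in>X. exp (f x))"
    by (rule sum_mono)
  moreover have "(\<Sum>x\<in>X. exp m * (1 + (f x - m))) = exp m * card X"
    using card_pos by (simp add: sum.distrib sum_subtractf sum_distrib_left[symmetric] m_def)
  ultimately show ?thesis
    using card_pos unfolding m_def[symmetric] by (simp add: pos_le_divide_eq)
qed

lemma mean_selection_le_ln_sum_exp:
  fixes Z :: "'i \<Rightarrow> 'a \<Rightarrow> real" and C :: real
  assumes "finite X" "X \<noteq> {}" "finite I" "\<And>x. x \<in> X \<Longrightarrow> A x \<in> I" "t > 0"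
    and moments: "\<And>a. a \<in> I \<Longrightarrow> (\<Sum>x\<in>X. exp (t * Z a x)) \<le> C * card X"
  shows "(\<Sum>x\<in>X. Z (A x) x) / card X \<le> ln (card I * C) / t"
proof -
  have card_pos: "real (card X) > 0" using assms by (simp add: card_gt_0_iff)
  have "exp (t * ((\<Sum>x\<in>X. Z (A x) x) / card X)) \<le> (\<Sum>x\<in>X. exp (t * Z (A x) x)) / card X"
    using exp_mean_le_mean_exp[OF assms(1,2), of "\<lambda>x. t * Z (A x) x"]
    by (simp add: sum_distrib_left[symmetric])
  also have "\<dots> \<le> (\<Sum>x\<in>X. \<Sum>a\<in>I. exp (t * Z a x)) / card X"
    using assms(3,4) by (intro divide_right_mono sum_mono member_le_sum[where f = "\<lambda>a. exp (t * Z a _)"]) auto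
  also have "\<dots> = (\<Sum>a\<in>I. \<Sum>x\<in>X. exp (t * Z a x)) / card X"
    by (subst sum.swap) simp
  also have "\<dots> \<le> (\<Sum>a\<in>I. C * card X) / card X"
    using moments by (intro divide_right_mono sum_mono) auto
  also have "\<dots> = card I * C"
    using card_pos by simp
  finally have "t * ((\<Sum>x\<in>X. Z (A x) x) / card X) \<le> ln (card I * C)"
    by (metis exp_gt_zero exp_le_cancel_iff exp_ln order_less_le_trans)
  then show ?thesis
    using \<open>t > 0\<close> by (simp add: pos_le_divide_eq mult.commute)
qed

section \<open>The hidden matching game\<close>

definition hm_sign :: "nat \<Rightarrow> nat \<Rightarrow> (nat \<times> nat) \<times> nat \<Rightarrow> real" where
  "hm_sign k a out = (case out of ((i, j), b) \<Rightarrow> if bits_ip k (xor a b) (xor i j) then -1 else 1)"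

lemma hm_wins_indicator:
  "(if hm_wins k x a out then 1 else 0 :: real)
     = (1 + hm_sign k a out * spin x (fst (fst out)) * spin x (snd (fst out))) / 2"
  by (auto simp: hm_wins_def hm_sign_def spin_def split: prod.split)

definition bob_kernel ::
  "nat \<Rightarrow> (nat set set \<Rightarrow> (nat \<times> nat) \<times> nat) \<Rightarrow> nat \<Rightarrow> nat \<Rightarrow> nat \<Rightarrow> real" where
  "bob_kernel k B a = pair_kernel (\<lambda>M. fst (B M))
     (\<lambda>M. hm_sign k a (B M) / card (perfect_matchings (2 ^ k))) (perfect_matchings (2 ^ k))"

lemma hm_valid_strategy_edge:
  assumes "hm_valid_strategy k A B" "M \<in> perfect_matchings (2 ^ k)"
  shows "fst (fst (B M)) \<noteq> snd (fst (B M)) \<and> fst (fst (B M)) < 2 ^ k \<and> snd (fst (B M)) < 2 ^ k"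
proof -
  from assms have "{fst (fst (B M)), snd (fst (B M))} \<in> M"
    unfolding hm_valid_strategy_def by blast
  from perfect_matching_edgeD[OF assms(2) this] show ?thesis by simp
qed

lemma hm_valid_strategy_exists: "\<exists>A B. hm_valid_strategy k A B"
proof -
  define B where "B M = ((SOME p. {fst p, snd p} \<in> M), 0 :: nat)" for M :: "nat set set"
  have "{fst (fst (B M)), snd (fst (B M))} \<in> M" if M: "M \<in> perfect_matchings (2 ^ k)" for M
  proof -
    have "\<exists>!j. {0, j} \<in> M" using perfect_matching_partner[OF M] by simp
    then obtain j where "{0, j} \<in> M" by blast
    then have "\<exists>p. {fst p, snd p} \<in> M" by auto
    from someI_ex[OF this] show ?thesis unfolding B_def by simp
  qed
  then have "hm_valid_strategy k (\<lambda>_. 0) B"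
    unfolding hm_valid_strategy_def B_def by simp
  then show ?thesis by blast
qed

lemma hm_inputs_card: "card (hm_inputs n) = 2 ^ n" and hm_inputs_finite: "finite (hm_inputs n)"
  unfolding hm_inputs_def by (simp_all add: card_PiE finite_PiE)

lemma hm_win_prob_eq_chaos:
  assumes valid: "hm_valid_strategy k A B" and nonempty: "perfect_matchings (2 ^ k) \<noteq> {}"
  shows "hm_win_prob k A B = 1 / 2
    + (\<Sum>x\<in>hm_inputs (2 ^ k). chaos (bob_kernel k B (A x)) (2 ^ k) (spin x))
      / (2 * card (hm_inputs (2 ^ k)))"
proof -
  let ?P = "perfect_matchings (2 ^ k)" and ?X = "hm_inputs (2 ^ k)"
  have P_pos: "real (card ?P) > 0"
    using nonempty perfect_matchings_finite by (simp add: card_gt_0_iff)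
  have X_pos: "real (card ?X) > 0"
    by (simp add: hm_inputs_card)
  have correlation: "card ?P * chaos (bob_kernel k B a) (2 ^ k) (spin x)
      = (\<Sum>M\<in>?P. hm_sign k a (B M) * spin x (fst (fst (B M))) * spin x (snd (fst (B M))))" for a x
  proof -
    have "chaos (bob_kernel k B a) (2 ^ k) (spin x) = (\<Sum>M\<in>?P.
        hm_sign k a (B M) / card ?P * spin x (fst (fst (B M))) * spin x (snd (fst (B M))))"
      unfolding bob_kernel_def
      by (rule chaos_pair_kernel[OF perfect_matchings_finite]) (use hm_valid_strategy_edge[OF valid] in simp)
    then show ?thesis
      using P_pos by (simp add: sum_divide_distrib[symmetric])
  qed
  have wins: "(\<Sum>M\<in>?P. if hm_wins k x (A x) (B M) then 1 else 0 :: real)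
      = card ?P / 2 + card ?P * chaos (bob_kernel k B (A x)) (2 ^ k) (spin x) / 2" for x
    unfolding hm_wins_indicator correlation
    by (simp add: sum.distrib add_divide_distrib sum_divide_distrib)
  show ?thesis
    using P_pos X_pos unfolding hm_win_prob_def wins
    by (simp add: sum.distrib sum_divide_distrib[symmetric] sum_distrib_left[symmetric] field_simps)
qed

lemma frob_sq_bob_kernel:
  fixes n :: nat
  assumes valid: "hm_valid_strategy k A B" and n: "n = 2 ^ k" "2 \<le> n"
  shows "frob_sq (bob_kernel k B a) n \<le> 1 / (real n - 1)"
proof -
  let ?P = "perfect_matchings n"
  have edges: "fst (fst (B M)) \<noteq> snd (fst (B M)) \<and> fst (fst (B M)) < n \<and> snd (fst (B M)) < n"
    if "M \<in> ?P" for M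
    using hm_valid_strategy_edge[OF valid] that n(1) by simp
  have multiplicity: "real (card {M \<in> ?P. {fst (fst (B M)), snd (fst (B M))} = {i, j}})
      \<le> card ?P / (real n - 1)" if "i < j" "j < n" for i j
  proof -
    have "card {M \<in> ?P. {fst (fst (B M)), snd (fst (B M))} = {i, j}} \<le> card {M \<in> ?P. {i, j} \<in> M}"
      using valid n(1) unfolding hm_valid_strategy_def
      by (intro card_mono) (auto simp: perfect_matchings_finite)
    moreover have "card {M \<in> ?P. {i, j} \<in> M} * (n - 1) = card ?P"
      using card_perfect_matchings_containing[of i n j] that by simp
    then have "real (card {M \<in> ?P. {i, j} \<in> M} * (n - 1)) = card ?P"
      by (rule arg_cong)
    then have "real (card {M \<in> ?P. {i, j} \<in> M}) * (real n - 1) = card ?P"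
      using n(2) by (simp add: of_nat_diff)
    then have "real (card {M \<in> ?P. {i, j} \<in> M}) = card ?P / (real n - 1)"
      using n(2) by (simp add: eq_divide_eq)
    ultimately show ?thesis by simp
  qed
  have "frob_sq (bob_kernel k B a) n \<le> (1 / card ?P)\<^sup>2 * (card ?P / (real n - 1)) * card ?P"
    unfolding bob_kernel_def n(1)[symmetric]
    by (rule frob_sq_pair_kernel_le[OF perfect_matchings_finite edges _ multiplicity])
      (simp_all add: hm_sign_def split: prod.split)
  also have "\<dots> \<le> 1 / (real n - 1)"
    using n(2) by (cases "card ?P = 0") (simp_all add: power2_eq_square)
  finally show ?thesis .
qed

lemma sum_hm_inputs_exp_chaos_le:
  assumes "t\<^sup>2 * frob_sq W n \<le> 1 / 16"
  shows "(\<Sum>x\<in>hm_inputs n. exp (t * chaos W n (spin x))) \<le> 2 ^ n * exp (2 * t\<^sup>2 * frob_sq W n)"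
  using cube_mean_exp_chaos_le[OF assms] unfolding cube_mean_def hm_inputs_def
  by (simp add: divide_le_eq mult.commute)

text \<open>The parameter \<open>sqrt (n - 1) / 4\<close> is the largest one allowed by
  \<open>cube_mean_exp_chaos_le\<close> under the bound \<open>frob_sq_bob_kernel\<close>.\<close>
lemma sum_hm_inputs_exp_bob_chaos_le:
  fixes n :: nat
  assumes valid: "hm_valid_strategy k A B" and n: "n = 2 ^ k" "2 \<le> n"
  shows "(\<Sum>x\<in>hm_inputs n. exp (sqrt (real n - 1) / 4 * chaos (bob_kernel k B a) n (spin x)))
    \<le> exp (1 / 8) * card (hm_inputs n)"
proof -
  let ?t = "sqrt (real n - 1) / 4" and ?F = "frob_sq (bob_kernel k B a) n"
  have "?t\<^sup>2 * ?F \<le> ?t\<^sup>2 * (1 / (real n - 1))"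
    using frob_sq_bob_kernel[OF valid n] by (intro mult_left_mono) simp_all
  also have "\<dots> = 1 / 16" using n(2) by (simp add: power_divide)
  finally have small: "?t\<^sup>2 * ?F \<le> 1 / 16" .
  have "(\<Sum>x\<in>hm_inputs n. exp (?t * chaos (bob_kernel k B a) n (spin x))) \<le> 2 ^ n * exp (2 * ?t\<^sup>2 * ?F)"
    by (rule sum_hm_inputs_exp_chaos_le[OF small])
  also have "\<dots> \<le> 2 ^ n * exp (1 / 8)"
    using small by simp
  finally show ?thesis
    by (simp add: hm_inputs_card mult.commute)
qed

lemma hm_win_prob_le:
  fixes n :: nat
  assumes valid: "hm_valid_strategy k A B" and n: "n = 2 ^ k" "2 \<le> n"
  shows "hm_win_prob k A B \<le> 1 / 2 + 2 * (ln (real n) + 1 / 8) / sqrt (real n - 1)"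
proof (cases "perfect_matchings n = {}")
  case True
  \<comment> \<open>impossible for even \<open>n\<close>, and harmless: \<open>hm_win_prob\<close> is then \<open>0\<close> (division by zero)\<close>
  then show ?thesis
    using n by (simp add: hm_win_prob_def)
next
  case False
  define mean where "mean = (\<Sum>x\<in>hm_inputs n. chaos (bob_kernel k B (A x)) n (spin x)) / card (hm_inputs n)"
  define bound where "bound = 2 * (ln (real n) + 1 / 8) / sqrt (real n - 1)"
  have inputs_nonempty: "hm_inputs n \<noteq> {}"
    using hm_inputs_card[of n] by auto
  have answers: "A x \<in> {..<n}" if "x \<in> hm_inputs n" for x
    using valid that n(1) unfolding hm_valid_strategy_def by simp
  have "sqrt (real n - 1) / 4 > 0"
    using n(2) by simp
  from mean_selection_le_ln_sum_exp[OF hm_inputs_finite inputs_nonempty finite_lessThan answers this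
      sum_hm_inputs_exp_bob_chaos_le[OF valid n]]
  have "mean \<le> ln (card {..<n} * exp (1 / 8)) / (sqrt (real n - 1) / 4)"
    unfolding mean_def .
  also have "\<dots> = 2 * bound"
    using n(2) by (simp add: bound_def ln_mult)
  finally have "mean \<le> 2 * bound" .
  moreover have "hm_win_prob k A B = 1 / 2 + mean / 2"
    using hm_win_prob_eq_chaos[OF valid] False n(1) unfolding mean_def by simp
  ultimately show ?thesis
    unfolding bound_def[symmetric] by linarith
qed

lemma ln_bound_le_sqrt_log:
  fixes n :: real
  assumes "2 \<le> n"
  shows "2 * (ln n + 1 / 8) / sqrt (n - 1) \<le> 8 * sqrt n * log 2 n / (n - 1)"
proof -
  have log_ge_1: "log 2 n \<ge> 1" using assms by simp
  have "ln n \<le> log 2 n"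
    using assms ln_2_less_1 by (simp add: log_def divide_simps)
  then have numerator: "2 * (ln n + 1 / 8) \<le> 4 * log 2 n"
    using log_ge_1 by (simp add: algebra_simps)
  have root_sq: "sqrt (n - 1) * sqrt (n - 1) = n - 1" using assms by simp
  have "a / sqrt (n - 1) = a * sqrt (n - 1) / (n - 1)" for a
    using assms root_sq by (simp add: divide_simps)
  then have "2 * (ln n + 1 / 8) / sqrt (n - 1) = 2 * (ln n + 1 / 8) * sqrt (n - 1) / (n - 1)" .
  also have "\<dots> \<le> 4 * log 2 n * sqrt n / (n - 1)"
  proof (rule divide_right_mono)
    show "2 * (ln n + 1 / 8) * sqrt (n - 1) \<le> 4 * log 2 n * sqrt n"
      by (rule mult_mono[OF numerator]) (use assms log_ge_1 in simp_all)
  qed (use assms in simp)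
  also have "\<dots> \<le> 8 * sqrt n * log 2 n / (n - 1)"
    using assms log_ge_1 by (intro divide_right_mono) simp_all
  finally show ?thesis .
qed

theorem mainTheorem2:
  fixes n k :: nat
  assumes "n = 2 ^ k" and "2 \<le> n"
  shows "hm_classical_value k \<le> 1/2 + 8 * sqrt (real n) * log 2 (real n) / (real n - 1)"
proof -
  have "hm_win_prob k A B \<le> 1/2 + 8 * sqrt (real n) * log 2 (real n) / (real n - 1)"
    if "hm_valid_strategy k A B" for A B
    using hm_win_prob_le[OF that assms] ln_bound_le_sqrt_log[of n] assms(2) by simp
  then show ?thesis
    unfolding hm_classical_value_def using hm_valid_strategy_exists[of k]
    by (intro cSup_least) auto
qed

end
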